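(* Let $P$, $G$, $G_0$ be as in the context, and set $R(z)=(G-z)^{-1}$, $R_0(z)=(G_0-z)^{-1}$, $V=G_0-G$. For every $k\in\mathbb N$, $k\geq1$, and $z\in\mathbb C\setminus\mathbb R$, $R(z)^k$ is a finite sum of terms of the form \[M_0VM_1V\cdots VM_n,\] where $M_0=R_0(z)^{\alpha_0}$, $M_n=R_0(z)^{\alpha_n}$, and for $1\leq j\leq n-1$ either $M_j=R(z)$ (in which case one sets $\alpha_j=1$) or $M_j=R_0(z)^{\alpha_j}$; moreover the integers $\alpha_j$ satisfy, for all $j\in\{0,\dots,n\}$, $0<\alpha_j\leq k$, $\alpha_j+\alpha_{j+1}\leq k+1$ (for $j<n$), and $\sum_{j=0}^n\alpha_j=n+k$.
   Context: On $\mathbb R^d$, $P=-b\,\mathrm{div}(A\nabla b)$ with smooth real $b\geq\delta>0$ and smooth real symmetric $A\geq\delta I_d$, whose coefficients satisfy $|\partial^\alpha(A-I_d)|+|\partial^\alpha(b-1)|\lesssim\langle x\rangle^{-\rho-|\alpha|}$ for some $\rho>0$. $G=i\begin{pmatrix}0&1\\-P&0\end{pmatrix}$, $G_0=i\begin{pmatrix}0&1\\ \Delta&0\end{pmatrix}$, so $V=G_0-G=i\begin{pmatrix}0&0\\P+\Delta&0\end{pmatrix}$, a bounded operator $H^{s+1}\oplus H^s\to H^s\oplus H^{s-1}$. *)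

theory Defs
  imports "HOL-Analysis.Analysis"
begin

text \<open>A factor M_j in a product M_0 V M_1 V ... V M_n: either the perturbed
  resolvent R(z) (exponent alpha_j = 1 by convention) or a power R_0(z)^alpha
  of the free resolvent.\<close>
datatype factor = Res | Res0 nat

fun alpha :: "factor \<Rightarrow> nat" where
  "alpha Res = 1"
| "alpha (Res0 a) = a"

fun factor_op :: "('v \<Rightarrow> 'v) \<Rightarrow> ('v \<Rightarrow> 'v) \<Rightarrow> factor \<Rightarrow> 'v \<Rightarrow> 'v" where
  "factor_op R R0 Res = R"
| "factor_op R R0 (Res0 a) = R0 ^^ a"

fun term_op :: "('v \<Rightarrow> 'v) \<Rightarrow> ('v \<Rightarrow> 'v) \<Rightarrow> ('v \<Rightarrow> 'v) \<Rightarrow> factor list \<Rightarrow> 'v \<Rightarrow> 'v" where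
  "term_op R R0 V [] = id"
| "term_op R R0 V [m] = factor_op R R0 m"
| "term_op R R0 V (m # m' # ms) = factor_op R R0 m \<circ> V \<circ> term_op R R0 V (m' # ms)"

definition admissible_term :: "nat \<Rightarrow> factor list \<Rightarrow> bool" where
  "admissible_term k ms \<longleftrightarrow>
     ms \<noteq> [] \<and>
     (\<exists>a. hd ms = Res0 a) \<and> (\<exists>a. last ms = Res0 a) \<and>
     (\<forall>j < length ms. 0 < alpha (ms ! j) \<and> alpha (ms ! j) \<le> k) \<and>
     (\<forall>j. j + 1 < length ms \<longrightarrow> alpha (ms ! j) + alpha (ms ! (j + 1)) \<le> k + 1) \<and>
     (\<Sum>m\<leftarrow>ms. alpha m) = (length ms - 1) + k"

end

theory Submission
  imports Defs
begin

text \<open>Composing the two first-order resolvent identities R = R_0 + R_0 V R and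
  R = R_0 + R V R_0 gives R = R_0 + R_0 V R_0 + R_0 V R V R_0, in which R occurs only
  between two factors V. Writing R^(k+1) = R^k R and expanding the trailing R of each
  admissible term of R^k in this way raises the last exponent by one and appends one of
  the tails [], V R_0, V R V R_0; all new exponents are 1, so the admissibility bounds for
  k + 1 follow from those for k.\<close>

lemma term_op_Cons:
  "term_op R R0 V (m # ms) =
     (if ms = [] then factor_op R R0 m else factor_op R R0 m \<circ> V \<circ> term_op R R0 V ms)"
  by (cases ms) auto

lemma term_op_split_Res0_Suc:
  "term_op R R0 V (xs @ Res0 (Suc a) # ts) = term_op R R0 V (xs @ [Res0 a]) \<circ> term_op R R0 V (Res0 1 # ts)"
  by (induction xs) (auto simp: term_op_Cons o_assoc funpow_Suc_right simp del: funpow.simps)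

lemma admissible_term_iff:
  "admissible_term k ms \<longleftrightarrow>
     ms \<noteq> [] \<and> (\<exists>a. hd ms = Res0 a) \<and> (\<exists>a. last ms = Res0 a) \<and>
     (\<forall>m\<in>set ms. 0 < alpha m \<and> alpha m \<le> k) \<and>
     successively (\<lambda>m m'. alpha m + alpha m' \<le> k + 1) ms \<and>
     (\<Sum>m\<leftarrow>ms. alpha m) = length ms - 1 + k"
  by (simp add: admissible_term_def successively_conv_nth all_set_conv_all_nth)

lemma admissible_term_snoc:
  assumes "admissible_term k t"
  obtains xs a where "t = xs @ [Res0 a]"
  using assms unfolding admissible_term_iff by (metis append_butlast_last_id)

text \<open>The tails of the three terms in R = R_0 + R_0 V R_0 + R_0 V R V R_0.\<close>
definition resolvent_tails :: "factor list list" where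
  "resolvent_tails = [[], [Res0 1], [Res, Res0 1]]"

lemma admissible_term_extend:
  assumes adm: "admissible_term k (xs @ [Res0 a])" and ts: "ts \<in> set resolvent_tails"
  shows "admissible_term (Suc k) (xs @ Res0 (Suc a) # ts)"
proof -
  let ?P = "\<lambda>k m m'. alpha m + alpha m' \<le> k + 1"
  have a: "0 < a" "a \<le> k" and xs: "\<forall>m\<in>set xs. 0 < alpha m \<and> alpha m \<le> k"
    and adj: "successively (?P k) (xs @ [Res0 a])"
    using adm by (auto simp: admissible_term_iff)
  have "successively (?P (Suc k)) xs"
    using adj by (auto simp: successively_append_iff elim: successively_mono)
  moreover have "xs = [] \<or> ?P (Suc k) (last xs) (Res0 (Suc a))"
    using adj by (auto simp: successively_append_iff)
  moreover have "successively (?P (Suc k)) (Res0 (Suc a) # ts)"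
    using ts a by (auto simp: resolvent_tails_def)
  ultimately have "successively (?P (Suc k)) (xs @ Res0 (Suc a) # ts)"
    by (auto simp: successively_append_iff)
  then show ?thesis
    using adm ts a xs by (cases xs) (auto simp: admissible_term_iff resolvent_tails_def)
qed

definition append_R :: "factor list \<Rightarrow> factor list list" where
  "append_R t = map (\<lambda>ts. butlast t @ Res0 (Suc (alpha (last t))) # ts) resolvent_tails"

lemma append_R_snoc: "append_R (xs @ [Res0 a]) = map (\<lambda>ts. xs @ Res0 (Suc a) # ts) resolvent_tails"
  by (simp add: append_R_def)

lemma admissible_term_append_R:
  assumes "admissible_term k t" and "u \<in> set (append_R t)"
  shows "admissible_term (Suc k) u"
proof -
  obtain xs a where t: "t = xs @ [Res0 a]"
    using assms(1) by (rule admissible_term_snoc)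
  show ?thesis
    using assms admissible_term_extend unfolding t append_R_snoc by auto
qed

definition additive_on :: "'a::plus set \<Rightarrow> ('a \<Rightarrow> 'b::plus) \<Rightarrow> bool" where
  "additive_on A f \<longleftrightarrow> (\<forall>x\<in>A. \<forall>y\<in>A. f (x + y) = f x + f y)"

lemma additive_onD: "additive_on A f \<Longrightarrow> x \<in> A \<Longrightarrow> y \<in> A \<Longrightarrow> f (x + y) = f x + f y"
  by (simp add: additive_on_def)

lemma additive_on_comp:
  "additive_on A f \<Longrightarrow> f ` A \<subseteq> B \<Longrightarrow> additive_on B g \<Longrightarrow> additive_on A (g \<circ> f)"
  by (auto simp: additive_on_def image_subset_iff)

lemma additive_on_funpow:
  "f ` A \<subseteq> A \<Longrightarrow> additive_on A f \<Longrightarrow> additive_on A (f ^^ n)"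
proof (induction n)
  case 0
  show ?case by (simp add: additive_on_def)
next
  case (Suc n)
  then show ?case
    unfolding funpow_Suc_right by (blast intro: additive_on_comp)
qed

lemma additive_on_diff:
  fixes f :: "'a::ab_group_add \<Rightarrow> 'b::ab_group_add"
  assumes "additive_on A f" and "x \<in> A" "y \<in> A" "x - y \<in> A"
  shows "f (x - y) = f x - f y"
  using additive_onD[OF assms(1,4,3)] by (simp add: eq_diff_eq)

lemma additive_on_inverse:
  assumes "additive_on D L" and "\<And>x y. x \<in> D \<Longrightarrow> y \<in> D \<Longrightarrow> x + y \<in> D"
    and "R ` H \<subseteq> D" and "\<And>x. x \<in> H \<Longrightarrow> L (R x) = x" and "\<And>y. y \<in> D \<Longrightarrow> R (L y) = y"
  shows "additive_on H R"
  unfolding additive_on_def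
proof (intro ballI)
  fix x y assume "x \<in> H" "y \<in> H"
  then have D: "R x \<in> D" "R y \<in> D" using assms(3) by auto
  have "R (x + y) = R (L (R x) + L (R y))"
    using \<open>x \<in> H\<close> \<open>y \<in> H\<close> assms(4) by simp
  also have "\<dots> = R (L (R x + R y))"
    using additive_onD[OF assms(1) D] by simp
  also have "\<dots> = R x + R y"
    using assms(2,5) D by simp
  finally show "R (x + y) = R x + R y" .
qed

text \<open>L and L_0 stand for G - z and G_0 - z on the domain D; R and R_0 are their inverses,
  defined on H.\<close>
locale resolvent_pair =
  fixes H D :: "'v::ab_group_add set" and L L0 R R0 :: "'v \<Rightarrow> 'v"
  assumes H_add: "x \<in> H \<Longrightarrow> y \<in> H \<Longrightarrow> x + y \<in> H"
    and H_diff: "x \<in> H \<Longrightarrow> y \<in> H \<Longrightarrow> x - y \<in> H"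
    and D_add: "x \<in> D \<Longrightarrow> y \<in> D \<Longrightarrow> x + y \<in> D"
    and D_subset: "D \<subseteq> H"
    and L_additive: "additive_on D L" and L_maps: "L ` D \<subseteq> H"
    and L0_additive: "additive_on D L0" and L0_maps: "L0 ` D \<subseteq> H"
    and R_maps: "R ` H \<subseteq> D" and L_R: "x \<in> H \<Longrightarrow> L (R x) = x" and R_L: "y \<in> D \<Longrightarrow> R (L y) = y"
    and R0_maps: "R0 ` H \<subseteq> D" and L0_R0: "x \<in> H \<Longrightarrow> L0 (R0 x) = x" and R0_L0: "y \<in> D \<Longrightarrow> R0 (L0 y) = y"
begin

abbreviation V :: "'v \<Rightarrow> 'v" where
  "V \<equiv> \<lambda>y. L0 y - L y"

lemma R_additive: "additive_on H R"
  using L_additive D_add R_maps L_R R_L by (rule additive_on_inverse)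

lemma R0_additive: "additive_on H R0"
  using L0_additive D_add R0_maps L0_R0 R0_L0 by (rule additive_on_inverse)

lemma V_additive: "additive_on D V"
  using L_additive L0_additive by (simp add: additive_on_def algebra_simps)

lemma R_in_D: "x \<in> H \<Longrightarrow> R x \<in> D"
  using R_maps by blast

lemma R0_in_D: "x \<in> H \<Longrightarrow> R0 x \<in> D"
  using R0_maps by blast

lemma V_in_H: "y \<in> D \<Longrightarrow> V y \<in> H"
  using L_maps L0_maps H_diff by blast

lemma resolvent_identity_left: "x \<in> H \<Longrightarrow> R x = R0 x + R0 (V (R x))"
proof -
  assume x: "x \<in> H"
  have y: "R x \<in> D" "L0 (R x) \<in> H"
    using R_in_D[OF x] L0_maps by auto
  have "R0 (V (R x)) = R0 (L0 (R x) - x)"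
    using L_R[OF x] by simp
  also have "\<dots> = R x - R0 x"
    using additive_on_diff[OF R0_additive y(2) x H_diff[OF y(2) x]] R0_L0[OF y(1)] by simp
  finally show ?thesis by simp
qed

lemma resolvent_identity_right: "x \<in> H \<Longrightarrow> R x = R0 x + R (V (R0 x))"
proof -
  assume x: "x \<in> H"
  have w: "R0 x \<in> D" "L (R0 x) \<in> H"
    using R0_in_D[OF x] L_maps by auto
  have "R (V (R0 x)) = R (x - L (R0 x))"
    using L0_R0[OF x] by simp
  also have "\<dots> = R x - R0 x"
    using additive_on_diff[OF R_additive x w(2) H_diff[OF x w(2)]] R_L[OF w(1)] by simp
  finally show ?thesis by simp
qed

lemma resolvent_expansion:
  assumes x: "x \<in> H"
  shows "R x = (\<Sum>ts\<leftarrow>resolvent_tails. term_op R R0 V (Res0 1 # ts) x)"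
proof -
  have D: "R0 x \<in> D" "R (V (R0 x)) \<in> D"
    using x R0_in_D R_in_D V_in_H by auto
  have "R x = R0 x + R0 (V (R0 x + R (V (R0 x))))"
    using resolvent_identity_left[OF x] resolvent_identity_right[OF x] by simp
  also have "\<dots> = R0 x + R0 (V (R0 x)) + R0 (V (R (V (R0 x))))"
    using additive_onD[OF V_additive D] additive_onD[OF R0_additive V_in_H V_in_H] D
    by (simp add: add.assoc)
  finally show ?thesis
    by (simp add: resolvent_tails_def add.assoc)
qed

lemma R0_funpow_in_H: "x \<in> H \<Longrightarrow> (R0 ^^ n) x \<in> H"
  by (induction n) (use R0_in_D D_subset in auto)

lemma factor_op_in_D: "0 < alpha m \<Longrightarrow> x \<in> H \<Longrightarrow> factor_op R R0 m x \<in> D"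
  by (cases m) (auto simp: R_in_D R0_in_D R0_funpow_in_H gr0_conv_Suc)

lemma factor_op_additive: "additive_on H (factor_op R R0 m)"
proof (cases m)
  case Res
  then show ?thesis by (simp add: R_additive)
next
  case (Res0 a)
  have "R0 ` H \<subseteq> H"
    using R0_maps D_subset by blast
  then show ?thesis
    using Res0 R0_additive by (simp add: additive_on_funpow)
qed

lemma term_op_in_D:
  "t \<noteq> [] \<Longrightarrow> \<forall>m\<in>set t. 0 < alpha m \<Longrightarrow> x \<in> H \<Longrightarrow> term_op R R0 V t x \<in> D"
proof (induction t arbitrary: x)
  case (Cons m ms)
  then show ?case
    by (cases "ms = []") (auto simp: term_op_Cons factor_op_in_D V_in_H)
qed simp

lemma term_op_additive: "\<forall>m\<in>set t. 0 < alpha m \<Longrightarrow> additive_on H (term_op R R0 V t)"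
proof (induction t)
  case Nil
  show ?case by (simp add: additive_on_def)
next
  case (Cons m ms)
  show ?case
  proof (cases "ms = []")
    case True
    then show ?thesis by (simp add: factor_op_additive)
  next
    case False
    have "term_op R R0 V ms ` H \<subseteq> D"
      using False Cons.prems term_op_in_D by auto
    moreover have "V ` D \<subseteq> H"
      using V_in_H by blast
    ultimately have "additive_on H (V \<circ> term_op R R0 V ms)"
      using Cons V_additive by (auto intro: additive_on_comp)
    moreover have "(V \<circ> term_op R R0 V ms) ` H \<subseteq> H"
      using \<open>term_op R R0 V ms ` H \<subseteq> D\<close> \<open>V ` D \<subseteq> H\<close> by auto
    ultimately have "additive_on H (factor_op R R0 m \<circ> V \<circ> term_op R R0 V ms)"
      unfolding comp_assoc using factor_op_additive by (rule additive_on_comp)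
    then show ?thesis
      unfolding term_op_Cons if_not_P[OF False] .
  qed
qed

lemma term_op_comp_R:
  assumes t: "admissible_term k t" and x: "x \<in> H"
  shows "term_op R R0 V t (R x) = (\<Sum>u\<leftarrow>append_R t. term_op R R0 V u x)"
proof -
  obtain xs a where t_snoc: "t = xs @ [Res0 a]"
    using t by (rule admissible_term_snoc)
  let ?T = "term_op R R0 V t"
  have T_additive: "additive_on H ?T"
    using t term_op_additive by (simp add: admissible_term_iff)
  let ?y = "\<lambda>ts. term_op R R0 V (Res0 1 # ts) x"
  have in_H: "?y [] \<in> H" "?y [Res0 1] \<in> H" "?y [Res, Res0 1] \<in> H"
    using term_op_in_D[of "[Res0 1]" x] term_op_in_D[of "[Res0 1, Res0 1]" x]
      term_op_in_D[of "[Res0 1, Res, Res0 1]" x] x D_subset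
    by (auto simp del: term_op.simps)
  have "?T (R x) = ?T (?y [] + ?y [Res0 1] + ?y [Res, Res0 1])"
    using resolvent_expansion[OF x] by (simp add: resolvent_tails_def add.assoc)
  also have "\<dots> = (\<Sum>ts\<leftarrow>resolvent_tails. ?T (?y ts))"
    using additive_onD[OF T_additive H_add[OF in_H(1,2)] in_H(3)]
      additive_onD[OF T_additive in_H(1,2)]
    by (simp only: resolvent_tails_def list.map sum_list_simps add.assoc add_0_right)
  also have "\<dots> = (\<Sum>u\<leftarrow>append_R t. term_op R R0 V u x)"
    by (simp add: t_snoc append_R_snoc term_op_split_Res0_Suc comp_def)
  finally show ?thesis .
qed

lemma resolvent_power_expansion:
  "1 \<le> k \<Longrightarrow> \<exists>ts. (\<forall>t\<in>set ts. admissible_term k t) \<and>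
     (\<forall>x\<in>H. (R ^^ k) x = (\<Sum>t\<leftarrow>ts. term_op R R0 V t x))"
proof (induction k rule: nat_induct_at_least)
  case base
  have "\<forall>t\<in>set (map (Cons (Res0 1)) resolvent_tails). admissible_term 1 t"
    by (simp add: admissible_term_iff resolvent_tails_def)
  then show ?case
    using resolvent_expansion by (intro exI[of _ "map (Cons (Res0 1)) resolvent_tails"]) (simp add: comp_def)
next
  case (Suc k)
  then obtain ts where adm: "\<forall>t\<in>set ts. admissible_term k t"
    and expansion: "\<forall>x\<in>H. (R ^^ k) x = (\<Sum>t\<leftarrow>ts. term_op R R0 V t x)"
    by blast
  have "(R ^^ Suc k) x = (\<Sum>u\<leftarrow>concat (map append_R ts). term_op R R0 V u x)" if x: "x \<in> H" for x
  proof -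
    have "(R ^^ Suc k) x = (\<Sum>t\<leftarrow>ts. term_op R R0 V t (R x))"
      using expansion R_in_D[OF x] D_subset by (auto simp: funpow_Suc_right simp del: funpow.simps)
    also have "\<dots> = (\<Sum>t\<leftarrow>ts. \<Sum>u\<leftarrow>append_R t. term_op R R0 V u x)"
      using adm term_op_comp_R[OF _ x] by (intro arg_cong[where f = sum_list] map_cong) auto
    also have "\<dots> = (\<Sum>u\<leftarrow>concat (map append_R ts). term_op R R0 V u x)"
      by (induction ts) auto
    finally show ?thesis .
  qed
  moreover have "\<forall>u\<in>set (concat (map append_R ts)). admissible_term (Suc k) u"
    using adm admissible_term_append_R by auto
  ultimately show ?case by blast
qed

end

theorem lemma4p2:
  fixes sc :: "complex \<Rightarrow> 'v::ab_group_add \<Rightarrow> 'v"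
    and H D :: "'v set"
    and G G0 R R0 :: "'v \<Rightarrow> 'v"
    and z :: complex and k :: nat
  assumes "module sc"
    and "module.subspace sc H" and "module.subspace sc D" and "D \<subseteq> H"
    and "\<forall>a\<in>D. \<forall>b\<in>D. G (a + b) = G a + G b" and "\<forall>c. \<forall>a\<in>D. G (sc c a) = sc c (G a)"
    and "\<forall>a\<in>D. \<forall>b\<in>D. G0 (a + b) = G0 a + G0 b" and "\<forall>c. \<forall>a\<in>D. G0 (sc c a) = sc c (G0 a)"
    and "G ` D \<subseteq> H" and "G0 ` D \<subseteq> H"
    and "Im z \<noteq> 0"
    and "R ` H \<subseteq> D" and "\<forall>x\<in>H. G (R x) - sc z (R x) = x" and "\<forall>y\<in>D. R (G y - sc z y) = y"
    and "R0 ` H \<subseteq> D" and "\<forall>x\<in>H. G0 (R0 x) - sc z (R0 x) = x" and "\<forall>y\<in>D. R0 (G0 y - sc z y) = y"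
    and "k \<ge> 1"
  shows "\<exists>ts. (\<forall>t\<in>set ts. admissible_term k t) \<and>
           (\<forall>x\<in>H. (R ^^ k) x = (\<Sum>t\<leftarrow>ts. term_op R R0 (\<lambda>y. G0 y - G y) t x))"
proof -
  interpret module sc by fact
  have shift_additive: "additive_on D (\<lambda>y. A y - sc z y)"
    if "\<forall>a\<in>D. \<forall>b\<in>D. A (a + b) = A a + A b" for A
    using that by (simp add: additive_on_def scale_right_distrib)
  have shift_maps: "(\<lambda>y. A y - sc z y) ` D \<subseteq> H" if "A ` D \<subseteq> H" for A
    using that \<open>D \<subseteq> H\<close> subspace_scale[OF assms(3)] subspace_diff[OF assms(2)] by blast
  interpret resolvent_pair H D "\<lambda>y. G y - sc z y" "\<lambda>y. G0 y - sc z y" R R0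
    using assms shift_additive shift_maps
    by unfold_locales (auto intro: subspace_add subspace_diff)
  have "(\<lambda>y. (G0 y - sc z y) - (G y - sc z y)) = (\<lambda>y. G0 y - G y)"
    by simp
  then show ?thesis
    using resolvent_power_expansion \<open>k \<ge> 1\<close> by simp
qed

end
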